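(* Let $m,n$ be positive integers. The poset $\mathbf{P}_{m,n}$ is a ranked poset in which the rank of $(i,j,k)$ equals $m+n-2-i-j+2k$. It has a unique minimal element $(m-1,n-1,0)$, which has rank $0$. The maximal elements are of the form $(i,i,i)$ and have rank $m+n-2$.
   Context: The poset $\mathbf{P}_{m,n}$ has elements the integer triples $(i,j,k)$ with $0\le k\le m-1$, $k\le j\le n-1$, $k\le i\le m-1$, and partial order generated by the covering relations: $(i,j,k)$ covers each of $(i+1,j,k)$, $(i,j+1,k)$, $(i-1,j,k-1)$, $(i,j-1,k-1)$ that is an element of $\mathbf{P}_{m,n}$. *)

theory Defs
  imports Main
begin

type_synonym triple = "int \<times> int \<times> int"

definition Pelems :: "nat \<Rightarrow> nat \<Rightarrow> triple set" where
  "Pelems m n = {(i,j,k). 0 \<le> k \<and> k \<le> int m - 1 \<and> k \<le> j \<and> j \<le> int n - 1 \<and> k \<le> i \<and> i \<le> int m - 1}"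

definition gen :: "nat \<Rightarrow> nat \<Rightarrow> triple \<Rightarrow> triple \<Rightarrow> bool" where
  "gen m n x y \<longleftrightarrow> x \<in> Pelems m n \<and> y \<in> Pelems m n \<and>
     (case y of (i,j,k) \<Rightarrow>
        x = (i+1,j,k) \<or> x = (i,j+1,k) \<or> x = (i-1,j,k-1) \<or> x = (i,j-1,k-1))"

definition Ple :: "nat \<Rightarrow> nat \<Rightarrow> triple \<Rightarrow> triple \<Rightarrow> bool" where
  "Ple m n x y \<longleftrightarrow> x \<in> Pelems m n \<and> y \<in> Pelems m n \<and> (gen m n)\<^sup>*\<^sup>* x y"

definition Pless :: "nat \<Rightarrow> nat \<Rightarrow> triple \<Rightarrow> triple \<Rightarrow> bool" where
  "Pless m n x y \<longleftrightarrow> Ple m n x y \<and> x \<noteq> y"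

definition Pcovers :: "nat \<Rightarrow> nat \<Rightarrow> triple \<Rightarrow> triple \<Rightarrow> bool" where
  "Pcovers m n x y \<longleftrightarrow> Pless m n x y \<and> \<not> (\<exists>z. Pless m n x z \<and> Pless m n z y)"

definition Pminimal :: "nat \<Rightarrow> nat \<Rightarrow> triple \<Rightarrow> bool" where
  "Pminimal m n x \<longleftrightarrow> x \<in> Pelems m n \<and> \<not> (\<exists>y. Pless m n y x)"

definition Pmaximal :: "nat \<Rightarrow> nat \<Rightarrow> triple \<Rightarrow> bool" where
  "Pmaximal m n x \<longleftrightarrow> x \<in> Pelems m n \<and> \<not> (\<exists>y. Pless m n x y)"

definition Prank :: "nat \<Rightarrow> nat \<Rightarrow> triple \<Rightarrow> int" where
  "Prank m n x = (case x of (i,j,k) \<Rightarrow> int m + int n - 2 - i - j + 2 * k)"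

end

theory Submission
  imports Defs
begin

(* Every generating step raises m + n - 2 - i - j + 2k by exactly one, so the rank strictly
   increases along nontrivial chains: this gives antisymmetry, and a cover cannot be a chain of
   two or more steps, so it is a single generating step.  Minimal and maximal elements are
   exactly those without an incoming resp. outgoing generating step, and checking the four
   moves coordinatewise singles out (m-1, n-1, 0) and the diagonal triples (i, i, i). *)

lemma gen_Prank: "gen m n x y \<Longrightarrow> Prank m n y = Prank m n x + 1"
  unfolding gen_def Prank_def by (auto split: prod.splits)

lemma gen_Pelems: "gen m n x y \<Longrightarrow> x \<in> Pelems m n \<and> y \<in> Pelems m n"
  unfolding gen_def by auto

lemma Pless_if_gen:
  assumes "gen m n x y"
  shows "Pless m n x y"
proof -
  have "x \<noteq> y"
    using gen_Prank[OF assms] by auto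
  with assms gen_Pelems[OF assms] show ?thesis
    unfolding Pless_def Ple_def by auto
qed

lemma rtranclp_gen_Prank_less: "(gen m n)\<^sup>*\<^sup>* x y \<Longrightarrow> x = y \<or> Prank m n x < Prank m n y"
proof (induction rule: rtranclp_induct)
  case base
  then show ?case by simp
next
  case (step y z)
  then show ?case using gen_Prank[of m n y z] by auto
qed

lemma Pless_Prank_less: "Pless m n x y \<Longrightarrow> Prank m n x < Prank m n y"
  using rtranclp_gen_Prank_less unfolding Pless_def Ple_def by blast

lemma Ple_antisym: "Ple m n x y \<Longrightarrow> Ple m n y x \<Longrightarrow> x = y"
  using Pless_Prank_less[of m n x y] Pless_Prank_less[of m n y x] unfolding Pless_def by fastforce

lemma Pless_tranclp: "Pless m n x y \<Longrightarrow> (gen m n)\<^sup>+\<^sup>+ x y"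
  unfolding Pless_def Ple_def by (auto dest: rtranclpD)

lemma Pcovers_Prank: "Pcovers m n x y \<Longrightarrow> Prank m n y = Prank m n x + 1"
proof -
  assume cover: "Pcovers m n x y"
  then have "(gen m n)\<^sup>+\<^sup>+ x y"
    unfolding Pcovers_def by (blast intro: Pless_tranclp)
  then obtain z where xz: "gen m n x z" and zy: "(gen m n)\<^sup>*\<^sup>* z y"
    by (blast elim: converse_tranclpE intro: tranclp_into_rtranclp)
  have "z = y"
  proof (rule ccontr)
    assume "z \<noteq> y"
    then have "Pless m n z y"
      using zy gen_Pelems[OF xz] cover unfolding Pcovers_def Pless_def Ple_def by blast
    with Pless_if_gen[OF xz] cover show False
      unfolding Pcovers_def by blast
  qed
  with xz show ?thesis by (simp add: gen_Prank)
qed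

lemma Pminimal_iff_no_gen: "Pminimal m n x \<longleftrightarrow> x \<in> Pelems m n \<and> (\<nexists>y. gen m n y x)"
  unfolding Pminimal_def
  by (metis Pless_if_gen Pless_tranclp tranclp.cases)

lemma Pmaximal_iff_no_gen: "Pmaximal m n x \<longleftrightarrow> x \<in> Pelems m n \<and> (\<nexists>y. gen m n x y)"
  unfolding Pmaximal_def
  by (metis Pless_if_gen Pless_tranclp tranclpD)

lemma Pminimal_iff:
  assumes "0 < m" and "0 < n"
  shows "Pminimal m n x \<longleftrightarrow> x = (int m - 1, int n - 1, 0)"
proof
  assume min: "Pminimal m n x"
  obtain i j k where x: "x = (i, j, k)" by (cases x)
  have mem: "x \<in> Pelems m n" and no_gen: "\<And>y. \<not> gen m n y x"
    using min by (auto simp: Pminimal_iff_no_gen)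
  have "i = int m - 1"
    using mem no_gen[of "(i + 1, j, k)"] unfolding x gen_def Pelems_def by auto
  moreover have "j = int n - 1"
    using mem no_gen[of "(i, j + 1, k)"] unfolding x gen_def Pelems_def by auto
  moreover have "k = 0"
    using mem no_gen[of "(i - 1, j, k - 1)"] \<open>i = int m - 1\<close>
    unfolding x gen_def Pelems_def by auto
  ultimately show "x = (int m - 1, int n - 1, 0)" by (simp add: x)
next
  assume x: "x = (int m - 1, int n - 1, 0)"
  then show "Pminimal m n x"
    using assms unfolding Pminimal_iff_no_gen gen_def Pelems_def by auto
qed

lemma Pmaximal_diagonal: "Pmaximal m n x \<Longrightarrow> \<exists>i. x = (i, i, i)"
proof -
  assume max: "Pmaximal m n x"
  obtain i j k where x: "x = (i, j, k)" by (cases x)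
  have mem: "x \<in> Pelems m n" and no_gen: "\<And>y. \<not> gen m n x y"
    using max by (auto simp: Pmaximal_iff_no_gen)
  have "i = k"
    using mem no_gen[of "(i - 1, j, k)"] unfolding x gen_def Pelems_def by auto
  moreover have "j = k"
    using mem no_gen[of "(i, j - 1, k)"] unfolding x gen_def Pelems_def by auto
  ultimately show ?thesis by (auto simp: x)
qed

lemma Prank_diagonal: "Prank m n (i, i, i) = int m + int n - 2"
  by (simp add: Prank_def)

lemma Prank_bottom: "Prank m n (int m - 1, int n - 1, 0) = 0"
  by (simp add: Prank_def)

theorem proposition3p17:
  fixes m n :: nat
  assumes "0 < m" and "0 < n"
  shows "(\<forall>x y. Ple m n x y \<and> Ple m n y x \<longrightarrow> x = y)
       \<and> (\<forall>x y. Pcovers m n x y \<longrightarrow> Prank m n y = Prank m n x + 1)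
       \<and> (\<forall>x. Pminimal m n x \<longleftrightarrow> x = (int m - 1, int n - 1, 0))
       \<and> Prank m n (int m - 1, int n - 1, 0) = 0
       \<and> (\<forall>x. Pmaximal m n x \<longrightarrow> (\<exists>i. x = (i, i, i)) \<and> Prank m n x = int m + int n - 2)"
proof (intro conjI allI impI)
  fix x
  assume "Pmaximal m n x"
  then obtain i where "x = (i, i, i)"
    using Pmaximal_diagonal by blast
  then show "Prank m n x = int m + int n - 2"
    by (simp add: Prank_diagonal)
qed (use Ple_antisym Pcovers_Prank Pmaximal_diagonal Prank_bottom Pminimal_iff[OF assms] in blast)+

end
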